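(* There is an open set $U\subset\bigcup_{k\in\mathbb Z}\Sigma^1_k$ such that: - $U\cap\Sigma^1_k\neq\emptyset$ for every $k\in\mathbb Z$; - $K_1(u)\neq0$ for all $u\in U$, where $K_1(u):=\int_0^1\cos(u)\,\partial_x^{-1}\sin(u)\,dx$.
   Context: $\mathbb T=\mathbb R/\mathbb Z$, $H^m=H^m(\mathbb T,\mathbb R)$, $H_0^m$ is its mean-zero subspace, and $\partial_x^{-1}$ is the mean-zero antiderivative. For $k\in\mathbb Z$, $\Lambda^1_k$ is the set of $u:\mathbb R\to\mathbb R$ of the form $u(x)=2\pi kx+\mathring u(x)+c$ with $\mathring u\in H_0^1$ ($1$-periodically extended) and $c\in\mathbb R/2\pi\mathbb Z$; $k$ is called the topological charge. We set \[ \Sigma^1_k=\Big\{u\in\Lambda^1_k:\int_0^1\sin u\,dx=0=\int_0^1\cos u\,dx\Big\}, \] topologized as a subset of $\Lambda^1_k$, and the union over $k$ carries the disjoint-union topology. For $u\in\Sigma^1_k$, $\sin u$ has mean zero, so $\partial_x^{-1}\sin u$ is defined. *)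

theory Defs
  imports "HOL-Analysis.Analysis"
begin

definition int01 :: "(real \<Rightarrow> real) \<Rightarrow> real" where
  "int01 f = (LBINT x=ereal 0..ereal 1. f x)"

definition has_weak_deriv01 :: "(real \<Rightarrow> real) \<Rightarrow> (real \<Rightarrow> real) \<Rightarrow> bool" where
  "has_weak_deriv01 f g \<longleftrightarrow>
     set_borel_measurable lborel {0..1} g \<and>
     set_integrable lborel {0..1} (\<lambda>t. (g t)\<^sup>2) \<and>
     (\<forall>x\<in>{0..1}. f x = f 0 + (LBINT t=ereal 0..ereal x. g t))"

definition wderiv01 :: "(real \<Rightarrow> real) \<Rightarrow> real \<Rightarrow> real" where
  "wderiv01 f = (SOME g. has_weak_deriv01 f g)"

definition H1 :: "(real \<Rightarrow> real) set" where
  "H1 = {v. (\<forall>x. v (x + 1) = v x) \<and> (\<exists>g. has_weak_deriv01 v g)}"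

definition H1_0 :: "(real \<Rightarrow> real) set" where
  "H1_0 = {v \<in> H1. int01 v = 0}"

definition H1_norm :: "(real \<Rightarrow> real) \<Rightarrow> real" where
  "H1_norm f = sqrt (int01 (\<lambda>x. (f x)\<^sup>2) + int01 (\<lambda>x. (wderiv01 f x)\<^sup>2))"

text \<open>Lambda^1_k: u x = 2 pi k x + v x + c with v in H^1_0 and c real
  (c is only relevant modulo 2 pi; see the pseudo-distance below).\<close>
definition Lambda1 :: "int \<Rightarrow> (real \<Rightarrow> real) set" where
  "Lambda1 k = {u. \<exists>v c. v \<in> H1_0 \<and> (\<forall>x. u x = 2 * pi * of_int k * x + v x + c)}"

definition Sigma1 :: "int \<Rightarrow> (real \<Rightarrow> real) set" where
  "Sigma1 k = {u \<in> Lambda1 k. int01 (\<lambda>x. sin (u x)) = 0 \<and> int01 (\<lambda>x. cos (u x)) = 0}"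

definition const_part :: "int \<Rightarrow> (real \<Rightarrow> real) \<Rightarrow> real" where
  "const_part k u = int01 (\<lambda>x. u x - 2 * pi * of_int k * x)"

definition osc_part :: "int \<Rightarrow> (real \<Rightarrow> real) \<Rightarrow> real \<Rightarrow> real" where
  "osc_part k u = (\<lambda>x. u x - 2 * pi * of_int k * x - const_part k u)"

text \<open>Distance on Lambda1 k \<cong> H^1_0 \<times> R/2piZ (product topology; the
  circle R/2piZ is embedded in C via c \<mapsto> e^{ic}).\<close>
definition Lambda1_dist :: "int \<Rightarrow> (real \<Rightarrow> real) \<Rightarrow> (real \<Rightarrow> real) \<Rightarrow> real" where
  "Lambda1_dist k u w =
     H1_norm (\<lambda>x. osc_part k u x - osc_part k w x)
     + cmod (cis (const_part k u) - cis (const_part k w))"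

text \<open>U is open in the disjoint union of the Sigma1 k (each with the subspace
  topology from Lambda1 k).\<close>
definition open_in_Sigma :: "(real \<Rightarrow> real) set \<Rightarrow> bool" where
  "open_in_Sigma U \<longleftrightarrow>
     U \<subseteq> (\<Union>k. Sigma1 k) \<and>
     (\<forall>k. \<forall>u\<in>U \<inter> Sigma1 k. \<exists>e>0. \<forall>w\<in>Sigma1 k. Lambda1_dist k u w < e \<longrightarrow> w \<in> U)"

definition antideriv0 :: "(real \<Rightarrow> real) \<Rightarrow> real \<Rightarrow> real" where
  "antideriv0 f x = (LBINT t=ereal 0..ereal x. f t) - int01 (\<lambda>y. LBINT t=ereal 0..ereal y. f t)"

definition K1 :: "(real \<Rightarrow> real) \<Rightarrow> real" where
  "K1 u = int01 (\<lambda>x. cos (u x) * antideriv0 (\<lambda>t. sin (u t)) x)"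

end

theory Submission
  imports Defs
begin

text \<open>
  The functional K1 is Lipschitz in the uniform distance of the phases:
  \<open>\<bar>K1 u - K1 w\<bar> \<le> 4 sup\<^sub>x \<bar>e^(i u x) - e^(i w x)\<bar>\<close>, since sin and cos are 1-Lipschitz images
  of \<open>e^(i u)\<close> and the mean-zero antiderivative at most doubles sup norms. On Lambda1 k this uniform
  distance is bounded by Lambda1_dist, because a mean-zero H^1 function is bounded pointwise by the
  L^2 norm of its derivative. Hence the points of the Sigma1 k where K1 does not vanish form an open
  set. It meets every Sigma1 k: for k \<noteq> 0 the linear phase \<open>2 pi k x\<close> has K1 = -1/(4 pi k), and for
  k = 0 a phase that winds once around the circle on [0,1/3] and unwinds on [1/3,1] has K1 = 1/(12 pi).
\<close>

section \<open>Interval integrals\<close>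

lemma interval_integral_FTC_real:
  fixes F f :: "real \<Rightarrow> real"
  assumes "\<And>x. (F has_real_derivative f x) (at x)" and "\<And>x. isCont f x"
  shows "(LBINT x=ereal a..ereal b. f x) = F b - F a"
proof (rule interval_integral_FTC_finite)
  show "continuous_on {min a b..max a b} f"
    by (intro continuous_at_imp_continuous_on ballI assms(2))
  show "(F has_vector_derivative f x) (at x within {min a b..max a b})" for x
    using assms(1)[of x]
    by (simp add: has_real_derivative_iff_has_vector_derivative[symmetric] has_field_derivative_at_within)
qed

lemma interval_integral_cong_open:
  assumes "a \<le> b" and "\<And>x. a < x \<Longrightarrow> x < b \<Longrightarrow> f x = g x"
  shows "(LBINT x=ereal a..ereal b. f x) = (LBINT x=ereal a..ereal b. g x)"
  using assms by (intro interval_integral_cong) (auto simp: einterval_iff)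

lemma interval_integral_split_cong:
  fixes h :: "real \<Rightarrow> real"
  assumes "a \<le> s" and "s \<le> b" and h: "set_integrable lborel {a..b} h"
    and "\<And>x. a < x \<Longrightarrow> x < s \<Longrightarrow> h x = h1 x" and "\<And>x. s < x \<Longrightarrow> x < b \<Longrightarrow> h x = h2 x"
  shows "(LBINT x=ereal a..ereal b. h x) = (LBINT x=ereal a..ereal s. h1 x) + (LBINT x=ereal s..ereal b. h2 x)"
proof -
  have "interval_lebesgue_integrable lborel (ereal a) (ereal b) h"
    using assms(1,2) unfolding interval_lebesgue_integrable_def
    by (auto intro: set_integrable_subset[OF h])
  then have "(LBINT x=ereal a..ereal b. h x) = (LBINT x=ereal a..ereal s. h x) + (LBINT x=ereal s..ereal b. h x)"
    using assms(1,2) interval_integral_sum[of "ereal a" "ereal s" "ereal b" h] by (simp add: min_def max_def)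
  also have "(LBINT x=ereal a..ereal s. h x) = (LBINT x=ereal a..ereal s. h1 x)"
    using assms by (intro interval_integral_cong_open) auto
  also have "(LBINT x=ereal s..ereal b. h x) = (LBINT x=ereal s..ereal b. h2 x)"
    using assms by (intro interval_integral_cong_open) auto
  finally show ?thesis .
qed

lemma set_integrable_bounded_Icc:
  fixes h :: "real \<Rightarrow> real"
  assumes "h \<in> borel_measurable borel" and "\<And>x. \<bar>h x\<bar> \<le> B"
  shows "set_integrable lborel {a..b} h"
  unfolding set_integrable_def
  using assms by (intro integrableI_bounded_set_indicator[where B = B]) (auto simp: emeasure_lborel_Icc_eq)

lemma set_borel_measurable_Icc_iff:
  fixes g :: "real \<Rightarrow> real"
  shows "set_borel_measurable lborel {a..b} g \<longleftrightarrow> g \<in> borel_measurable (restrict_space lborel {a..b})"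
  unfolding set_borel_measurable_def by (simp add: borel_measurable_restrict_space_iff)

lemma interval_integral_sin_affine:
  fixes \<alpha> \<beta> :: real
  assumes "\<alpha> \<noteq> 0"
  shows "(LBINT x=ereal a..ereal b. sin (\<alpha> * x + \<beta>)) = (cos (\<alpha> * a + \<beta>) - cos (\<alpha> * b + \<beta>)) / \<alpha>"
proof -
  have "(LBINT x=ereal a..ereal b. sin (\<alpha> * x + \<beta>)) = - cos (\<alpha> * b + \<beta>) / \<alpha> - - cos (\<alpha> * a + \<beta>) / \<alpha>"
    by (rule interval_integral_FTC_real) (use assms in \<open>auto intro!: derivative_eq_intros continuous_intros\<close>)
  then show ?thesis
    by (simp add: diff_divide_distrib)
qed

lemma interval_integral_cos_affine:
  fixes \<alpha> \<beta> :: real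
  assumes "\<alpha> \<noteq> 0"
  shows "(LBINT x=ereal a..ereal b. cos (\<alpha> * x + \<beta>)) = (sin (\<alpha> * b + \<beta>) - sin (\<alpha> * a + \<beta>)) / \<alpha>"
proof -
  have "(LBINT x=ereal a..ereal b. cos (\<alpha> * x + \<beta>)) = sin (\<alpha> * b + \<beta>) / \<alpha> - sin (\<alpha> * a + \<beta>) / \<alpha>"
    by (rule interval_integral_FTC_real) (use assms in \<open>auto intro!: derivative_eq_intros continuous_intros\<close>)
  then show ?thesis
    by (simp add: diff_divide_distrib)
qed

lemma interval_integral_cos_affine_mult:
  fixes \<alpha> \<beta> p q :: real
  assumes "\<alpha> \<noteq> 0" and "sin (\<alpha> * a + \<beta>) = 0" and "sin (\<alpha> * b + \<beta>) = 0"
  shows "(LBINT x=ereal a..ereal b. cos (\<alpha> * x + \<beta>) * (p + q * cos (\<alpha> * x + \<beta>))) = q * (b - a) / 2"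
proof -
  define F where "F x = p * sin (\<alpha> * x + \<beta>) / \<alpha> + q * (x / 2 + sin (\<alpha> * x + \<beta>) * cos (\<alpha> * x + \<beta>) / (2 * \<alpha>))"
    for x
  have sin_sq: "sin y * sin y = 1 - cos y * cos y" for y :: real
    using sin_squared_eq[of y] by (simp add: power2_eq_square)
  have "(LBINT x=ereal a..ereal b. cos (\<alpha> * x + \<beta>) * (p + q * cos (\<alpha> * x + \<beta>))) = F b - F a"
    unfolding F_def using assms(1)
    by (intro interval_integral_FTC_real) (auto intro!: derivative_eq_intros continuous_intros simp: field_simps sin_sq)
  also have "\<dots> = q * (b - a) / 2"
    unfolding F_def using assms by (simp add: field_simps)
  finally show ?thesis .
qed

lemma interval_integral_eq_integral_0:
  fixes g :: "real \<Rightarrow> real"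
  assumes "set_integrable lborel {0..1} g" and "x \<in> {0..1}"
  shows "(LBINT t=ereal 0..ereal x. g t) = integral {0..x} g"
proof (rule interval_integral_eq_integral)
  show "set_integrable lborel {0..x} g"
    by (rule set_integrable_subset[OF assms(1)]) (use assms(2) in auto)
qed (use assms(2) in auto)

lemma int01_eq_integral:
  assumes "continuous_on {0..1} f"
  shows "int01 f = integral {0..1} f"
  unfolding int01_def
  by (rule interval_integral_eq_integral_0[OF borel_integrable_atLeastAtMost'[OF assms]]) simp

lemma int01_cong:
  assumes "\<And>x. x \<in> {0..1} \<Longrightarrow> f x = g x"
  shows "int01 f = int01 g"
  unfolding int01_def by (rule interval_integral_cong) (simp add: assms einterval_iff)

lemma int01_nonneg:
  assumes "\<And>x. 0 \<le> f x"
  shows "0 \<le> int01 f"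
  unfolding int01_def interval_lebesgue_integral_def set_lebesgue_integral_def
  using assms by (auto intro!: integral_nonneg simp: indicator_def)

lemma abs_integral_le_bound_01:
  fixes f :: "real \<Rightarrow> real"
  assumes "continuous_on {0..1} f" and "\<And>t. t \<in> {0..1} \<Longrightarrow> \<bar>f t\<bar> \<le> B" and "x \<in> {0..1}"
  shows "\<bar>integral {0..x} f\<bar> \<le> B"
proof -
  have "0 \<le> B" using assms(2)[of 0] by simp
  have "norm (integral {0..x} f) \<le> B * (x - 0)"
    by (rule integral_bound) (use assms in \<open>auto intro: continuous_on_subset\<close>)
  also have "\<dots> \<le> B" using \<open>0 \<le> B\<close> assms(3) by (simp add: mult_left_le)
  finally show ?thesis by simp
qed

lemma integral_abs_le_sqrt_integral_square_01:
  fixes g :: "real \<Rightarrow> real"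
  assumes "set_integrable lborel {0..1} g" and "set_integrable lborel {0..1} (\<lambda>t. (g t)\<^sup>2)"
  shows "integral {0..1} (\<lambda>t. \<bar>g t\<bar>) \<le> sqrt (integral {0..1} (\<lambda>t. (g t)\<^sup>2))"
proof -
  define m where "m = integral {0..1} (\<lambda>t. \<bar>g t\<bar>)"
  define I where "I = integral {0..1} (\<lambda>t. (g t)\<^sup>2)"
  have abs_g: "((\<lambda>t. \<bar>g t\<bar>) has_integral m) {0..1}"
    using set_borel_integral_eq_integral(1)[OF set_integrable_abs[OF assms(1)]]
    unfolding m_def by (rule integrable_integral)
  have g2: "((\<lambda>t. (g t)\<^sup>2) has_integral I) {0..1}"
    using set_borel_integral_eq_integral(1)[OF assms(2)] unfolding I_def by (rule integrable_integral)
  have "((\<lambda>t. (g t)\<^sup>2 - 2 * m * \<bar>g t\<bar> + m\<^sup>2) has_integral I - 2 * m * m + m\<^sup>2) {0..1}"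
    using has_integral_add[OF has_integral_diff[OF g2 has_integral_mult_right[OF abs_g, of "2 * m"]]
        has_integral_const_real[of "m\<^sup>2" 0 1]]
    by simp
  moreover have "0 \<le> (g t)\<^sup>2 - 2 * m * \<bar>g t\<bar> + m\<^sup>2" for t
  proof -
    have "(g t)\<^sup>2 - 2 * m * \<bar>g t\<bar> + m\<^sup>2 = (\<bar>g t\<bar> - m)\<^sup>2"
      by (simp add: power2_diff algebra_simps)
    then show ?thesis by simp
  qed
  ultimately have "0 \<le> I - 2 * m * m + m\<^sup>2"
    by (rule has_integral_nonneg)
  then show ?thesis
    unfolding m_def[symmetric] I_def[symmetric] by (simp add: real_le_rsqrt power2_eq_square)
qed

section \<open>Weak derivatives and the space H1_0\<close>

lemma has_weak_deriv01I:
  assumes "set_borel_measurable lborel {0..1} g" and "set_integrable lborel {0..1} (\<lambda>t. (g t)\<^sup>2)"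
    and "\<And>x. x \<in> {0..1} \<Longrightarrow> f x = f 0 + (LBINT t=ereal 0..ereal x. g t)"
  shows "has_weak_deriv01 f g"
  using assms unfolding has_weak_deriv01_def by blast

lemma has_weak_deriv01D:
  assumes "has_weak_deriv01 f g"
  shows "set_borel_measurable lborel {0..1} g" and "set_integrable lborel {0..1} (\<lambda>t. (g t)\<^sup>2)"
    and "x \<in> {0..1} \<Longrightarrow> f x = f 0 + (LBINT t=ereal 0..ereal x. g t)"
  using assms unfolding has_weak_deriv01_def by blast+

lemma has_weak_deriv01_set_integrable:
  assumes "has_weak_deriv01 f g"
  shows "set_integrable lborel {0..1} g"
proof (rule set_integrable_bound[where f = "\<lambda>t. 1 + (g t)\<^sup>2"])
  show "set_integrable lborel {0..1} (\<lambda>t. 1 + (g t)\<^sup>2)"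
    using has_weak_deriv01D(2)[OF assms] borel_integrable_atLeastAtMost'[of 0 1 "\<lambda>t. 1"]
    by (intro set_integral_add(1)) auto
  show "set_borel_measurable lborel {0..1} g"
    by (rule has_weak_deriv01D(1)[OF assms])
  have "\<bar>y\<bar> \<le> 1 + y\<^sup>2" for y :: real
    using sum_squares_bound[of 1 "\<bar>y\<bar>"] by simp
  then show "AE x in lborel. x \<in> {0..1} \<longrightarrow> norm (g x) \<le> norm (1 + (g x)\<^sup>2)"
    by (intro AE_I2) simp
qed

lemma has_weak_deriv01_integral:
  assumes "has_weak_deriv01 f g" and "x \<in> {0..1}"
  shows "f x = f 0 + integral {0..x} g"
  using has_weak_deriv01D(3)[OF assms]
    interval_integral_eq_integral_0[OF has_weak_deriv01_set_integrable[OF assms(1)] assms(2)]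
  by linarith

lemma has_weak_deriv01_continuous_on:
  assumes "has_weak_deriv01 f g"
  shows "continuous_on {0..1} f"
proof -
  have "g integrable_on {0..1}"
    using set_borel_integral_eq_integral(1)[OF has_weak_deriv01_set_integrable[OF assms]] .
  then have "continuous_on {0..1} (\<lambda>x. f 0 + integral {0..x} g)"
    by (intro continuous_intros indefinite_integral_continuous_1)
  then show ?thesis
    by (rule continuous_on_eq) (rule has_weak_deriv01_integral[OF assms, symmetric])
qed

lemma has_weak_deriv01_cong:
  assumes f: "has_weak_deriv01 f g" and eq: "\<And>x. x \<in> {0..1} \<Longrightarrow> f x = h x"
  shows "has_weak_deriv01 h g"
proof (rule has_weak_deriv01I)
  show "h x = h 0 + (LBINT t=ereal 0..ereal x. g t)" if "x \<in> {0..1}" for x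
    using has_weak_deriv01D(3)[OF f that] eq[OF that] eq[of 0] by fastforce
qed (use has_weak_deriv01D[OF f] in auto)

lemma has_weak_deriv01_add_const:
  assumes f: "has_weak_deriv01 f g"
  shows "has_weak_deriv01 (\<lambda>x. f x + c) g"
proof (rule has_weak_deriv01I)
  show "f x + c = (f 0 + c) + (LBINT t=ereal 0..ereal x. g t)" if "x \<in> {0..1}" for x
    using has_weak_deriv01D(3)[OF f that] by simp
qed (use has_weak_deriv01D[OF f] in auto)

lemma has_weak_deriv01_diff:
  assumes f: "has_weak_deriv01 f g" and h: "has_weak_deriv01 h k"
  shows "has_weak_deriv01 (\<lambda>x. f x - h x) (\<lambda>x. g x - k x)"
proof (rule has_weak_deriv01I)
  have [measurable]: "g \<in> borel_measurable (restrict_space lborel {0..1})"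
    "k \<in> borel_measurable (restrict_space lborel {0..1})"
    using has_weak_deriv01D(1)[OF f] has_weak_deriv01D(1)[OF h]
    unfolding set_borel_measurable_Icc_iff by auto
  show "set_borel_measurable lborel {0..1} (\<lambda>t. g t - k t)"
    unfolding set_borel_measurable_Icc_iff by measurable
  show "set_integrable lborel {0..1} (\<lambda>t. (g t - k t)\<^sup>2)"
  proof (rule set_integrable_bound[where f = "\<lambda>t. 2 * (g t)\<^sup>2 + 2 * (k t)\<^sup>2"])
    show "set_integrable lborel {0..1} (\<lambda>t. 2 * (g t)\<^sup>2 + 2 * (k t)\<^sup>2)"
      using has_weak_deriv01D(2)[OF f] has_weak_deriv01D(2)[OF h]
      by (intro set_integral_add(1) set_integrable_mult_right)
    show "set_borel_measurable lborel {0..1} (\<lambda>t. (g t - k t)\<^sup>2)"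
      unfolding set_borel_measurable_Icc_iff by measurable
    have "(y - z)\<^sup>2 \<le> 2 * y\<^sup>2 + 2 * z\<^sup>2" for y z :: real
      using zero_le_power2[of "y + z"] unfolding power2_sum power2_diff by linarith
    then show "AE x in lborel. x \<in> {0..1} \<longrightarrow>
        norm ((g x - k x)\<^sup>2) \<le> norm (2 * (g x)\<^sup>2 + 2 * (k x)\<^sup>2)"
      by (intro AE_I2) simp
  qed
  show "f x - h x = (f 0 - h 0) + (LBINT t=ereal 0..ereal x. g t - k t)" if "x \<in> {0..1}" for x
  proof -
    have "set_integrable lborel {0..x} g" "set_integrable lborel {0..x} k"
      using that has_weak_deriv01_set_integrable[OF f] has_weak_deriv01_set_integrable[OF h]
      by (auto intro: set_integrable_subset)
    then have "(LBINT t=ereal 0..ereal x. g t - k t)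
        = (LBINT t=ereal 0..ereal x. g t) - (LBINT t=ereal 0..ereal x. k t)"
      using that by (intro interval_lebesgue_integral_diff) (auto simp: interval_lebesgue_integrable_def
          intro: set_integrable_subset)
    then show ?thesis
      using has_weak_deriv01D(3)[OF f that] has_weak_deriv01D(3)[OF h that] by linarith
  qed
qed

lemma abs_diff_le_integral_abs_deriv:
  assumes "has_weak_deriv01 f g" and "x \<in> {0..1}" and "y \<in> {0..1}"
  shows "\<bar>f x - f y\<bar> \<le> integral {0..1} (\<lambda>t. \<bar>g t\<bar>)"
proof -
  have g: "g integrable_on {0..1}" and abs_g: "(\<lambda>t. \<bar>g t\<bar>) integrable_on {0..1}"
    using has_weak_deriv01_set_integrable[OF assms(1)]
    by (auto intro: set_borel_integral_eq_integral(1) set_integrable_abs)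
  have "\<bar>f b - f a\<bar> \<le> integral {0..1} (\<lambda>t. \<bar>g t\<bar>)" if "0 \<le> a" "a \<le> b" "b \<le> 1" for a b
  proof -
    have "f b - f a = integral {0..b} g - integral {0..a} g"
      using that has_weak_deriv01_integral[OF assms(1), of a] has_weak_deriv01_integral[OF assms(1), of b]
      by simp
    also have "\<dots> = integral {a..b} g"
      using Henstock_Kurzweil_Integration.integral_combine[OF that(1,2) integrable_on_subinterval[OF g]] that by simp
    also have "\<bar>\<dots>\<bar> \<le> integral {a..b} (\<lambda>t. \<bar>g t\<bar>)"
      using integral_norm_bound_integral[of g "{a..b}" "\<lambda>t. \<bar>g t\<bar>"]
        integrable_on_subinterval[OF g] integrable_on_subinterval[OF abs_g] that by simp
    also have "\<dots> \<le> integral {0..1} (\<lambda>t. \<bar>g t\<bar>)"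
      by (rule integral_subset_le) (use that abs_g integrable_on_subinterval[OF abs_g] in auto)
    finally show ?thesis .
  qed
  from this[of x y] this[of y x] assms(2,3) show ?thesis
    by (cases "x \<le> y") (auto simp: abs_minus_commute)
qed

lemma mean_zero_abs_le_integral_abs_deriv:
  assumes "has_weak_deriv01 f g" and "int01 f = 0" and "x \<in> {0..1}"
  shows "\<bar>f x\<bar> \<le> integral {0..1} (\<lambda>t. \<bar>g t\<bar>)"
proof -
  have f: "f integrable_on {0..1}"
    using has_weak_deriv01_continuous_on[OF assms(1)] by (rule integrable_continuous_interval)
  have "f x = integral {0..1} (\<lambda>y. f x - f y)"
    using assms(2) int01_eq_integral[OF has_weak_deriv01_continuous_on[OF assms(1)]]
    by (simp add: integral_diff[OF integrable_const_ivl f])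
  also have "\<bar>\<dots>\<bar> \<le> integral {0..1} (\<lambda>t. \<bar>g t\<bar>)"
    using has_weak_deriv01_continuous_on[OF assms(1)] abs_diff_le_integral_abs_deriv[OF assms(1,3)]
    by (intro abs_integral_le_bound_01 continuous_on_diff continuous_on_const) auto
  finally show ?thesis .
qed

lemma H1_0_continuous_on: "v \<in> H1_0 \<Longrightarrow> continuous_on {0..1} v"
  unfolding H1_0_def H1_def by (auto intro: has_weak_deriv01_continuous_on)

lemma zero_in_H1_0: "(\<lambda>x. 0) \<in> H1_0"
proof -
  have "has_weak_deriv01 (\<lambda>x. 0) (\<lambda>x. 0)"
    by (rule has_weak_deriv01I) (simp_all add: set_borel_measurable_def set_integrable_def)
  then show ?thesis
    unfolding H1_0_def H1_def int01_def by auto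
qed

lemma H1_0_diff:
  assumes "v \<in> H1_0" and "w \<in> H1_0"
  shows "(\<lambda>x. v x - w x) \<in> H1_0"
proof -
  have "int01 (\<lambda>x. v x - w x) = int01 v - int01 w"
    using H1_0_continuous_on[OF assms(1)] H1_0_continuous_on[OF assms(2)]
    by (simp add: int01_eq_integral continuous_on_diff integral_diff integrable_continuous_interval)
  with assms show ?thesis
    unfolding H1_0_def H1_def by (auto intro: has_weak_deriv01_diff)
qed

lemma H1_0_abs_le_H1_norm:
  assumes "v \<in> H1_0" and "x \<in> {0..1}"
  shows "\<bar>v x\<bar> \<le> H1_norm v"
proof -
  obtain g where "has_weak_deriv01 v g"
    using assms(1) unfolding H1_0_def H1_def by blast
  then have G: "has_weak_deriv01 v (wderiv01 v)"
    unfolding wderiv01_def by (rule someI[where P = "has_weak_deriv01 v"])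
  have G2: "set_integrable lborel {0..1} (\<lambda>t. (wderiv01 v t)\<^sup>2)"
    by (rule has_weak_deriv01D(2)[OF G])
  have "\<bar>v x\<bar> \<le> integral {0..1} (\<lambda>t. \<bar>wderiv01 v t\<bar>)"
    using G assms by (intro mean_zero_abs_le_integral_abs_deriv) (auto simp: H1_0_def)
  also have "\<dots> \<le> sqrt (integral {0..1} (\<lambda>t. (wderiv01 v t)\<^sup>2))"
    by (rule integral_abs_le_sqrt_integral_square_01[OF has_weak_deriv01_set_integrable[OF G] G2])
  also have "integral {0..1} (\<lambda>t. (wderiv01 v t)\<^sup>2) = int01 (\<lambda>t. (wderiv01 v t)\<^sup>2)"
    unfolding int01_def by (rule interval_integral_eq_integral_0[OF G2, symmetric]) simp
  also have "sqrt \<dots> \<le> H1_norm v"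
    unfolding H1_norm_def by (simp add: int01_nonneg)
  finally show ?thesis .
qed

lemma osc_part_in_H1_0:
  assumes "u \<in> Lambda1 k"
  shows "osc_part k u \<in> H1_0"
proof -
  obtain v c where v: "v \<in> H1_0" and u: "\<And>x. u x = 2 * pi * of_int k * x + v x + c"
    using assms unfolding Lambda1_def by blast
  have "const_part k u = int01 (\<lambda>x. v x + c)"
    unfolding const_part_def u by simp
  also have "\<dots> = c"
    using v H1_0_continuous_on[OF v]
    by (simp add: int01_eq_integral continuous_on_add integral_add integrable_continuous_interval H1_0_def)
  finally have "osc_part k u = v"
    unfolding osc_part_def u by simp
  with v show ?thesis by simp
qed

lemma Lambda1_continuous_on:
  assumes "u \<in> Lambda1 k"
  shows "continuous_on {0..1} u"
proof -
  have "continuous_on {0..1} (\<lambda>x. 2 * pi * of_int k * x + osc_part k u x + const_part k u)"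
    using H1_0_continuous_on[OF osc_part_in_H1_0[OF assms]] by (intro continuous_intros)
  then show ?thesis
    by (simp add: osc_part_def)
qed

lemma norm_cis_diff_le: "cmod (cis a - cis b) \<le> \<bar>a - b\<bar>"
proof -
  have "cis a - cis b = cis b * (cis (a - b) - 1)"
    by (simp add: right_diff_distrib cis_mult)
  also have "cmod \<dots> = 2 * \<bar>sin ((a - b) / 2)\<bar>"
    using dist_exp_i_1[of "a - b"] by (simp add: norm_mult cis_conv_exp)
  also have "\<dots> \<le> \<bar>a - b\<bar>"
    using abs_sin_x_le_abs_x[of "(a - b) / 2"] by simp
  finally show ?thesis .
qed

lemma abs_cos_diff_le_norm_cis_diff: "\<bar>cos a - cos b\<bar> \<le> cmod (cis a - cis b)"
  using abs_Re_le_cmod[of "cis a - cis b"] by simp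

lemma abs_sin_diff_le_norm_cis_diff: "\<bar>sin a - sin b\<bar> \<le> cmod (cis a - cis b)"
  using abs_Im_le_cmod[of "cis a - cis b"] by simp

lemma norm_cis_diff_le_Lambda1_dist:
  assumes "u \<in> Lambda1 k" and "w \<in> Lambda1 k" and "x \<in> {0..1}"
  shows "cmod (cis (u x) - cis (w x)) \<le> Lambda1_dist k u w"
proof -
  define a where "a = 2 * pi * of_int k * x + osc_part k w x"
  define d where "d = (\<lambda>x. osc_part k u x - osc_part k w x)"
  define cu cw where "cu = const_part k u" and "cw = const_part k w"
  have d_in_H1_0: "d \<in> H1_0"
    unfolding d_def using assms by (intro H1_0_diff osc_part_in_H1_0)
  have "u x = a + d x + cu" and "w x = a + cw"
    unfolding a_def d_def cu_def cw_def osc_part_def by simp_all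
  then have "cmod (cis (u x) - cis (w x)) = cmod ((cis (a + d x + cu) - cis (a + cu)) + cis a * (cis cu - cis cw))"
    by (simp add: cis_mult algebra_simps)
  also have "\<dots> \<le> cmod (cis (a + d x + cu) - cis (a + cu)) + cmod (cis a * (cis cu - cis cw))"
    by (rule norm_triangle_ineq)
  also have "\<dots> \<le> \<bar>d x\<bar> + cmod (cis cu - cis cw)"
    using norm_cis_diff_le[of "a + d x + cu" "a + cu"] by (simp add: norm_mult)
  also have "\<bar>d x\<bar> \<le> H1_norm d"
    using d_in_H1_0 assms(3) by (rule H1_0_abs_le_H1_norm)
  finally show ?thesis
    by (simp add: Lambda1_dist_def d_def cu_def cw_def)
qed

section \<open>Continuity of K1\<close>

lemma antideriv0_eq_integral:
  assumes "continuous_on {0..1} f" and "x \<in> {0..1}"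
  shows "antideriv0 f x = integral {0..x} f - integral {0..1} (\<lambda>y. integral {0..y} f)"
proof -
  have f: "set_integrable lborel {0..1} f"
    by (rule borel_integrable_atLeastAtMost'[OF assms(1)])
  have "int01 (\<lambda>y. LBINT t=ereal 0..ereal y. f t) = int01 (\<lambda>y. integral {0..y} f)"
    by (rule int01_cong) (rule interval_integral_eq_integral_0[OF f])
  also have "\<dots> = integral {0..1} (\<lambda>y. integral {0..y} f)"
    by (intro int01_eq_integral indefinite_integral_continuous_1 integrable_continuous_interval assms(1))
  finally show ?thesis
    unfolding antideriv0_def using interval_integral_eq_integral_0[OF f assms(2)] by simp
qed

lemma continuous_on_antideriv0:
  assumes "continuous_on {0..1} f"
  shows "continuous_on {0..1} (antideriv0 f)"
proof -
  have "continuous_on {0..1} (\<lambda>x. integral {0..x} f - integral {0..1} (\<lambda>y. integral {0..y} f))"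
    by (intro continuous_on_diff continuous_on_const indefinite_integral_continuous_1
        integrable_continuous_interval assms)
  then show ?thesis
    by (rule continuous_on_eq) (simp add: antideriv0_eq_integral[OF assms])
qed

lemma abs_antideriv0_le:
  assumes "continuous_on {0..1} f" and "\<And>t. t \<in> {0..1} \<Longrightarrow> \<bar>f t\<bar> \<le> B" and "x \<in> {0..1}"
  shows "\<bar>antideriv0 f x\<bar> \<le> 2 * B"
proof -
  have "\<bar>integral {0..1} (\<lambda>y. integral {0..y} f)\<bar> \<le> B"
  proof (rule abs_integral_le_bound_01)
    show "continuous_on {0..1} (\<lambda>y. integral {0..y} f)"
      by (intro indefinite_integral_continuous_1 integrable_continuous_interval assms(1))
    show "\<bar>integral {0..t} f\<bar> \<le> B" if "t \<in> {0..1}" for t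
      by (rule abs_integral_le_bound_01[OF assms(1,2) that])
  qed simp
  then show ?thesis
    using antideriv0_eq_integral[OF assms(1,3)] abs_integral_le_bound_01[OF assms] by linarith
qed

lemma antideriv0_diff:
  assumes f: "continuous_on {0..1} f" and h: "continuous_on {0..1} h" and "x \<in> {0..1}"
  shows "antideriv0 (\<lambda>t. f t - h t) x = antideriv0 f x - antideriv0 h x"
proof -
  have primitive_diff: "integral {0..y} (\<lambda>t. f t - h t) = integral {0..y} f - integral {0..y} h"
    if "y \<in> {0..1}" for y
    using that by (intro integral_diff integrable_continuous_interval continuous_on_subset[OF f]
        continuous_on_subset[OF h]) auto
  have "integral {0..1} (\<lambda>y. integral {0..y} (\<lambda>t. f t - h t))
      = integral {0..1} (\<lambda>y. integral {0..y} f - integral {0..y} h)"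
    by (rule integral_cong) (rule primitive_diff)
  also have "\<dots> = integral {0..1} (\<lambda>y. integral {0..y} f) - integral {0..1} (\<lambda>y. integral {0..y} h)"
    by (intro integral_diff integrable_continuous_interval indefinite_integral_continuous_1 f h)
  finally show ?thesis
    using primitive_diff[OF assms(3)] antideriv0_eq_integral[OF continuous_on_diff[OF f h] assms(3)]
      antideriv0_eq_integral[OF f assms(3)] antideriv0_eq_integral[OF h assms(3)] by simp
qed

lemma abs_antideriv0_diff_le:
  assumes f: "continuous_on {0..1} f" and h: "continuous_on {0..1} h"
    and "\<And>t. t \<in> {0..1} \<Longrightarrow> \<bar>f t - h t\<bar> \<le> \<delta>" and "x \<in> {0..1}"
  shows "\<bar>antideriv0 f x - antideriv0 h x\<bar> \<le> 2 * \<delta>"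
  unfolding antideriv0_diff[OF f h \<open>x \<in> {0..1}\<close>, symmetric]
  using assms by (intro abs_antideriv0_le continuous_on_diff)

lemma abs_K1_diff_le:
  assumes u: "continuous_on {0..1} u" and w: "continuous_on {0..1} w"
    and close: "\<And>x. x \<in> {0..1} \<Longrightarrow> cmod (cis (u x) - cis (w x)) \<le> \<delta>"
  shows "\<bar>K1 u - K1 w\<bar> \<le> 4 * \<delta>"
proof -
  define A where "A v = antideriv0 (\<lambda>t. sin (v t))" for v :: "real \<Rightarrow> real"
  have "cmod (cis (u 0) - cis (w 0)) \<le> \<delta>"
    by (rule close) simp
  with norm_ge_zero have "0 \<le> \<delta>"
    by (rule order_trans)
  have sin_cont: "continuous_on {0..1} (\<lambda>t. sin (u t))" "continuous_on {0..1} (\<lambda>t. sin (w t))"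
    using u w by (auto intro: continuous_on_sin)
  have cos_close: "\<bar>cos (u x) - cos (w x)\<bar> \<le> \<delta>" if "x \<in> {0..1}" for x
    using abs_cos_diff_le_norm_cis_diff close[OF that] by (rule order_trans)
  have sin_close: "\<bar>sin (u x) - sin (w x)\<bar> \<le> \<delta>" if "x \<in> {0..1}" for x
    using abs_sin_diff_le_norm_cis_diff close[OF that] by (rule order_trans)
  have A_cont: "continuous_on {0..1} (\<lambda>x. cos (v x) * A v x)" if "continuous_on {0..1} v" for v
    unfolding A_def using that
    by (intro continuous_on_mult continuous_on_cos continuous_on_antideriv0 continuous_on_sin)
  have pointwise: "\<bar>cos (u x) * A u x - cos (w x) * A w x\<bar> \<le> 4 * \<delta>" if x: "x \<in> {0..1}" for x
  proof -
    have "\<bar>A u x\<bar> \<le> 2"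
      unfolding A_def using abs_antideriv0_le[OF sin_cont(1) _ x, of 1] by simp
    then have "\<bar>cos (u x) - cos (w x)\<bar> * \<bar>A u x\<bar> \<le> \<delta> * 2"
      using cos_close[OF x] \<open>0 \<le> \<delta>\<close> by (intro mult_mono) auto
    moreover have "\<bar>A u x - A w x\<bar> \<le> 2 * \<delta>"
      unfolding A_def by (rule abs_antideriv0_diff_le[OF sin_cont sin_close x])
    then have "\<bar>cos (w x)\<bar> * \<bar>A u x - A w x\<bar> \<le> 1 * (2 * \<delta>)"
      by (intro mult_mono) auto
    moreover have "cos (u x) * A u x - cos (w x) * A w x
        = (cos (u x) - cos (w x)) * A u x + cos (w x) * (A u x - A w x)"
      by (simp add: algebra_simps)
    then have "\<bar>cos (u x) * A u x - cos (w x) * A w x\<bar>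
        \<le> \<bar>cos (u x) - cos (w x)\<bar> * \<bar>A u x\<bar> + \<bar>cos (w x)\<bar> * \<bar>A u x - A w x\<bar>"
      using abs_triangle_ineq[of "(cos (u x) - cos (w x)) * A u x" "cos (w x) * (A u x - A w x)"]
      by (simp add: abs_mult)
    ultimately show ?thesis
      by linarith
  qed
  have "K1 u - K1 w = integral {0..1} (\<lambda>x. cos (u x) * A u x - cos (w x) * A w x)"
    unfolding K1_def A_def[symmetric] int01_eq_integral[OF A_cont[OF u]] int01_eq_integral[OF A_cont[OF w]]
    by (intro integral_diff[symmetric] integrable_continuous_interval A_cont u w)
  also have "\<bar>\<dots>\<bar> \<le> 4 * \<delta>"
    using A_cont[OF u] A_cont[OF w] pointwise
    by (intro abs_integral_le_bound_01 continuous_on_diff) auto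
  finally show ?thesis .
qed

text \<open>The normalising constant of the mean-zero antiderivative drops out because cos u has mean zero.\<close>

lemma K1_Sigma1:
  assumes "u \<in> Sigma1 k"
  shows "K1 u = int01 (\<lambda>x. cos (u x) * (LBINT t=ereal 0..ereal x. sin (u t)))"
proof -
  define S where "S x = (LBINT t=ereal 0..ereal x. sin (u t))" for x
  define m where "m = int01 S"
  have u: "continuous_on {0..1} u"
    using assms unfolding Sigma1_def by (blast intro: Lambda1_continuous_on)
  have sin_u: "continuous_on {0..1} (\<lambda>t. sin (u t))"
    using u by (rule continuous_on_sin)
  have "continuous_on {0..1} (\<lambda>x. integral {0..x} (\<lambda>t. sin (u t)))"
    by (intro indefinite_integral_continuous_1 integrable_continuous_interval sin_u)
  then have S: "continuous_on {0..1} S"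
    by (rule continuous_on_eq)
      (simp add: S_def interval_integral_eq_integral_0[OF borel_integrable_atLeastAtMost'[OF sin_u]])
  have "K1 u = int01 (\<lambda>x. cos (u x) * S x - m * cos (u x))"
    unfolding K1_def antideriv0_def S_def m_def by (simp add: algebra_simps)
  also have "\<dots> = int01 (\<lambda>x. cos (u x) * S x) - m * int01 (\<lambda>x. cos (u x))"
    using u S unfolding int01_def
    by (simp add: interval_integrable_continuous_on continuous_on_mult continuous_on_cos)
  finally show ?thesis
    using assms unfolding Sigma1_def S_def by simp
qed

lemma open_in_Sigma_K1_ne_0: "open_in_Sigma {u \<in> (\<Union>k. Sigma1 k). K1 u \<noteq> 0}"
  unfolding open_in_Sigma_def
proof (intro conjI allI ballI)
  fix k u
  assume "u \<in> {u \<in> (\<Union>k. Sigma1 k). K1 u \<noteq> 0} \<inter> Sigma1 k"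
  then have u: "u \<in> Lambda1 k" and "K1 u \<noteq> 0"
    by (auto simp: Sigma1_def)
  show "\<exists>e>0. \<forall>w\<in>Sigma1 k. Lambda1_dist k u w < e \<longrightarrow> w \<in> {u \<in> (\<Union>k. Sigma1 k). K1 u \<noteq> 0}"
  proof (intro exI conjI ballI impI)
    show "0 < \<bar>K1 u\<bar> / 4"
      using \<open>K1 u \<noteq> 0\<close> by simp
    fix w
    assume "w \<in> Sigma1 k" and "Lambda1_dist k u w < \<bar>K1 u\<bar> / 4"
    moreover from this have "\<bar>K1 u - K1 w\<bar> \<le> 4 * Lambda1_dist k u w"
      using u by (intro abs_K1_diff_le Lambda1_continuous_on norm_cis_diff_le_Lambda1_dist)
        (auto simp: Sigma1_def)
    ultimately show "w \<in> {u \<in> (\<Union>k. Sigma1 k). K1 u \<noteq> 0}"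
      by auto
  qed
qed auto

section \<open>Points of every Sigma1 k with K1 \<noteq> 0\<close>

lemma linear_phase_in_Sigma1:
  assumes "k \<noteq> 0"
  shows "(\<lambda>x. 2 * pi * of_int k * x) \<in> Sigma1 k"
proof -
  have "(\<lambda>x. 2 * pi * of_int k * x) \<in> Lambda1 k"
    unfolding Lambda1_def using zero_in_H1_0 by (intro CollectI exI[of _ "\<lambda>x. 0"] exI[of _ 0]) simp
  moreover have "int01 (\<lambda>x. sin (2 * pi * of_int k * x)) = 0"
    using assms interval_integral_sin_affine[where \<alpha> = "2 * pi * of_int k" and \<beta> = 0 and a = 0 and b = 1]
    unfolding int01_def by simp
  moreover have "int01 (\<lambda>x. cos (2 * pi * of_int k * x)) = 0"
    using assms interval_integral_cos_affine[where \<alpha> = "2 * pi * of_int k" and \<beta> = 0 and a = 0 and b = 1]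
    unfolding int01_def by simp
  ultimately show ?thesis
    unfolding Sigma1_def by blast
qed

lemma K1_linear_phase:
  assumes "k \<noteq> 0"
  shows "K1 (\<lambda>x. 2 * pi * of_int k * x) = - 1 / (4 * pi * of_int k)"
proof -
  define \<alpha> where "\<alpha> = 2 * pi * of_int k"
  have "\<alpha> \<noteq> 0" and "sin \<alpha> = 0"
    using assms by (simp_all add: \<alpha>_def)
  have "K1 (\<lambda>x. \<alpha> * x) = int01 (\<lambda>x. cos (\<alpha> * x) * (LBINT t=ereal 0..ereal x. sin (\<alpha> * t)))"
    unfolding \<alpha>_def by (rule K1_Sigma1[OF linear_phase_in_Sigma1[OF assms]])
  also have "\<dots> = int01 (\<lambda>x. cos (\<alpha> * x) * ((1 - cos (\<alpha> * x)) / \<alpha>))"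
    using interval_integral_sin_affine[OF \<open>\<alpha> \<noteq> 0\<close>, where \<beta> = 0 and a = 0] by simp
  also have "(\<lambda>x. cos (\<alpha> * x) * ((1 - cos (\<alpha> * x)) / \<alpha>)) =
      (\<lambda>x. cos (\<alpha> * x + 0) * (1 / \<alpha> + (- 1 / \<alpha>) * cos (\<alpha> * x + 0)))"
    by (simp add: diff_divide_distrib)
  also have "int01 \<dots> = - 1 / (2 * \<alpha>)"
    unfolding int01_def
    using interval_integral_cos_affine_mult[OF \<open>\<alpha> \<noteq> 0\<close>, where \<beta> = 0 and a = 0 and b = 1 and p = "1 / \<alpha>" and q = "- 1 / \<alpha>"] \<open>sin \<alpha> = 0\<close>
    by simp
  finally show ?thesis
    unfolding \<alpha>_def by simp
qed

text \<open>The winding and unwinding speeds must differ: for a symmetric tent the two halves cancel in K1.\<close>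

definition tent :: "real \<Rightarrow> real" where
  "tent x = (if x \<le> 1/3 then 6 * pi * x else 3 * pi - 3 * pi * x)"

definition tent_wave :: "real \<Rightarrow> real" where
  "tent_wave x = tent (frac x)"

lemma continuous_on_tent: "continuous_on A tent"
proof -
  have "continuous_on UNIV tent"
    unfolding tent_def by (rule continuous_on_cases_le) (auto intro!: continuous_intros)
  then show ?thesis
    by (rule continuous_on_subset) simp
qed

lemma tent_wave_eq_tent:
  assumes "x \<in> {0..1}"
  shows "tent_wave x = tent x"
proof (cases "x = 1")
  case True
  then show ?thesis by (simp add: tent_wave_def tent_def frac_def)
next
  case False
  with assms show ?thesis by (simp add: tent_wave_def)
qed

lemma has_weak_deriv01_tent: "has_weak_deriv01 tent (\<lambda>x. if x \<le> 1/3 then 6 * pi else - 3 * pi)"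
  (is "has_weak_deriv01 tent ?g")
proof -
  have g[measurable]: "?g \<in> borel_measurable borel"
    by measurable
  have "(LBINT t=ereal 0..ereal x. ?g t) = tent x" if "x \<in> {0..1}" for x
  proof (cases "x \<le> 1/3")
    case True
    then have "(LBINT t=ereal 0..ereal x. ?g t) = (LBINT t=ereal 0..ereal x. 6 * pi)"
      using that by (intro interval_integral_cong_open) auto
    with True that show ?thesis
      by (simp add: tent_def)
  next
    case False
    then have "(LBINT t=ereal 0..ereal x. ?g t)
        = (LBINT t=ereal 0..ereal (1/3). 6 * pi) + (LBINT t=ereal (1/3)..ereal x. - 3 * pi)"
      using that by (intro interval_integral_split_cong set_integrable_bounded_Icc[OF g, where B = "6 * pi"]) auto
    with False that show ?thesis
      by (simp add: tent_def algebra_simps)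
  qed
  moreover have "(\<lambda>t. (?g t)\<^sup>2) \<in> borel_measurable borel"
    by measurable
  then have "set_integrable lborel {0..1} (\<lambda>t. (?g t)\<^sup>2)"
    by (rule set_integrable_bounded_Icc[where B = "36 * pi\<^sup>2"]) (simp add: power2_eq_square)
  moreover have "set_borel_measurable lborel {0..1} ?g"
    unfolding set_borel_measurable_def by measurable
  ultimately show ?thesis
    unfolding has_weak_deriv01_def by (simp add: tent_def)
qed

lemma interval_integral_sin_tent:
  assumes "x \<in> {0..1}"
  shows "(LBINT t=ereal 0..ereal x. sin (tent t)) =
    (if x \<le> 1/3 then (1 - cos (tent x)) / (6 * pi) else (cos (tent x) - 1) / (3 * pi))"
proof (cases "x \<le> 1/3")
  case True
  then have "(LBINT t=ereal 0..ereal x. sin (tent t)) = (LBINT t=ereal 0..ereal x. sin (6 * pi * t + 0))"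
    using assms by (intro interval_integral_cong_open) (auto simp: tent_def)
  with True show ?thesis
    using interval_integral_sin_affine[where \<alpha> = "6 * pi" and \<beta> = 0 and a = 0 and b = x]
    by (simp add: tent_def)
next
  case False
  then have "(LBINT t=ereal 0..ereal x. sin (tent t)) =
      (LBINT t=ereal 0..ereal (1/3). sin (6 * pi * t + 0)) + (LBINT t=ereal (1/3)..ereal x. sin (- (3 * pi) * t + 3 * pi))"
    using assms continuous_on_tent
    by (intro interval_integral_split_cong borel_integrable_atLeastAtMost' continuous_on_sin) (auto simp: tent_def)
  with False show ?thesis
    using interval_integral_sin_affine[where \<alpha> = "6 * pi" and \<beta> = 0 and a = 0 and b = "1/3"]
      interval_integral_sin_affine[where \<alpha> = "- (3 * pi)" and \<beta> = "3 * pi" and a = "1/3" and b = x]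
    by (simp add: tent_def field_simps)
qed

lemma int01_tent: "int01 tent = pi"
proof -
  have "int01 tent = (LBINT x=ereal 0..ereal (1/3). 6 * pi * x) + (LBINT x=ereal (1/3)..ereal 1. 3 * pi - 3 * pi * x)"
    unfolding int01_def using continuous_on_tent
    by (intro interval_integral_split_cong borel_integrable_atLeastAtMost') (auto simp: tent_def)
  also have "(LBINT x=ereal 0..ereal (1/3). 6 * pi * x) = 3 * pi * (1/3)\<^sup>2 - 3 * pi * 0\<^sup>2"
    by (rule interval_integral_FTC_real) (auto intro!: derivative_eq_intros continuous_intros simp: power2_eq_square)
  also have "(LBINT x=ereal (1/3)..ereal 1. 3 * pi - 3 * pi * x)
      = (3 * pi * 1 - 3 * pi * 1\<^sup>2 / 2) - (3 * pi * (1/3) - 3 * pi * (1/3)\<^sup>2 / 2)"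
    by (rule interval_integral_FTC_real) (auto intro!: derivative_eq_intros continuous_intros simp: power2_eq_square)
  finally show ?thesis
    by (simp add: power2_eq_square)
qed

lemma tent_wave_minus_pi_in_H1_0: "(\<lambda>x. tent_wave x - pi) \<in> H1_0"
proof -
  have "int01 (\<lambda>x. tent_wave x - pi) = int01 (\<lambda>x. tent x - pi)"
    by (rule int01_cong) (simp add: tent_wave_eq_tent)
  also have "\<dots> = 0"
    using int01_tent continuous_on_tent[of "{0..1}"]
    by (simp add: int01_eq_integral continuous_on_diff integral_diff integrable_continuous_interval)
  finally have "int01 (\<lambda>x. tent_wave x - pi) = 0" .
  moreover have "has_weak_deriv01 (\<lambda>x. tent_wave x - pi) (\<lambda>x. if x \<le> 1/3 then 6 * pi else - 3 * pi)"
    using has_weak_deriv01_add_const[OF has_weak_deriv01_tent, of "- pi"]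
    by (rule has_weak_deriv01_cong) (simp add: tent_wave_eq_tent)
  moreover have "tent_wave (x + 1) = tent_wave x" for x
    by (simp add: tent_wave_def frac_1_eq)
  ultimately show ?thesis
    unfolding H1_0_def H1_def by auto
qed

lemma tent_wave_in_Sigma1: "tent_wave \<in> Sigma1 0"
proof -
  have "tent_wave \<in> Lambda1 0"
    unfolding Lambda1_def using tent_wave_minus_pi_in_H1_0
    by (intro CollectI exI[of _ "\<lambda>x. tent_wave x - pi"] exI[of _ pi]) simp
  moreover have "int01 (\<lambda>x. sin (tent_wave x)) = 0"
  proof -
    have "int01 (\<lambda>x. sin (tent_wave x)) = (LBINT t=ereal 0..ereal 1. sin (tent t))"
      unfolding int01_def by (intro interval_integral_cong_open) (auto simp: tent_wave_eq_tent)
    then show ?thesis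
      using interval_integral_sin_tent[of 1] by (simp add: tent_def)
  qed
  moreover have "int01 (\<lambda>x. cos (tent_wave x)) = 0"
  proof -
    have "int01 (\<lambda>x. cos (tent_wave x)) = int01 (\<lambda>x. cos (tent x))"
      by (rule int01_cong) (simp add: tent_wave_eq_tent)
    also have "\<dots> =
        (LBINT x=ereal 0..ereal (1/3). cos (6 * pi * x + 0)) + (LBINT x=ereal (1/3)..ereal 1. cos (- (3 * pi) * x + 3 * pi))"
      unfolding int01_def using continuous_on_tent
      by (intro interval_integral_split_cong borel_integrable_atLeastAtMost' continuous_on_cos)
        (auto simp: tent_def)
    finally show ?thesis
      using interval_integral_cos_affine[where \<alpha> = "6 * pi" and \<beta> = 0 and a = 0 and b = "1/3"]
        interval_integral_cos_affine[where \<alpha> = "- (3 * pi)" and \<beta> = "3 * pi" and a = "1/3" and b = 1]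
      by simp
  qed
  ultimately show ?thesis
    unfolding Sigma1_def by blast
qed

lemma K1_tent_wave: "K1 tent_wave = 1 / (12 * pi)"
proof -
  define Q where "Q x = (if x \<le> 1/3 then (1 - cos (tent x)) / (6 * pi) else (cos (tent x) - 1) / (3 * pi))" for x
  have Q: "continuous_on {0..1} Q"
    unfolding Q_def
  proof (rule continuous_on_cases_le)
    show "(1 - cos (tent x)) / (6 * pi) = (cos (tent x) - 1) / (3 * pi)" if "x = 1/3" for x
      unfolding that by (simp add: tent_def)
  qed (use continuous_on_tent in \<open>auto intro!: continuous_intros\<close>)
  have "K1 tent_wave = int01 (\<lambda>x. cos (tent_wave x) * (LBINT t=ereal 0..ereal x. sin (tent_wave t)))"
    by (rule K1_Sigma1[OF tent_wave_in_Sigma1])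
  also have "\<dots> = int01 (\<lambda>x. cos (tent x) * Q x)"
  proof (rule int01_cong)
    fix x :: real
    assume x: "x \<in> {0..1}"
    then have "(LBINT t=ereal 0..ereal x. sin (tent_wave t)) = (LBINT t=ereal 0..ereal x. sin (tent t))"
      by (intro interval_integral_cong_open) (auto simp: tent_wave_eq_tent)
    with x show "cos (tent_wave x) * (LBINT t=ereal 0..ereal x. sin (tent_wave t)) = cos (tent x) * Q x"
      by (simp add: tent_wave_eq_tent interval_integral_sin_tent Q_def)
  qed
  also have "\<dots> =
      (LBINT x=ereal 0..ereal (1/3). cos (6 * pi * x + 0) * (1 / (6 * pi) + (- 1 / (6 * pi)) * cos (6 * pi * x + 0))) +
      (LBINT x=ereal (1/3)..ereal 1. cos (- (3 * pi) * x + 3 * pi) * (- 1 / (3 * pi) + 1 / (3 * pi) * cos (- (3 * pi) * x + 3 * pi)))"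
    unfolding int01_def using continuous_on_tent Q
    by (intro interval_integral_split_cong borel_integrable_atLeastAtMost' continuous_on_mult continuous_on_cos)
      (auto simp: Q_def tent_def field_simps)
  also have "\<dots> = 1 / (12 * pi)"
    using interval_integral_cos_affine_mult[where \<alpha> = "6 * pi" and \<beta> = 0 and a = 0 and b = "1/3"
        and p = "1 / (6 * pi)" and q = "- 1 / (6 * pi)"]
      interval_integral_cos_affine_mult[where \<alpha> = "- (3 * pi)" and \<beta> = "3 * pi" and a = "1/3" and b = 1
        and p = "- 1 / (3 * pi)" and q = "1 / (3 * pi)"]
    by simp
  finally show ?thesis .
qed

lemma ex_Sigma1_K1_ne_0: "\<exists>u\<in>Sigma1 k. K1 u \<noteq> 0"
proof (cases "k = 0")
  case True
  then show ?thesis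
    using tent_wave_in_Sigma1 K1_tent_wave by force
next
  case False
  then show ?thesis
    using linear_phase_in_Sigma1 K1_linear_phase by force
qed

theorem lemma4p2:
  shows "\<exists>U. open_in_Sigma U \<and> (\<forall>k. U \<inter> Sigma1 k \<noteq> {}) \<and> (\<forall>u\<in>U. K1 u \<noteq> 0)"
proof (intro exI conjI allI ballI)
  show "open_in_Sigma {u \<in> (\<Union>k. Sigma1 k). K1 u \<noteq> 0}"
    by (rule open_in_Sigma_K1_ne_0)
  show "{u \<in> (\<Union>k. Sigma1 k). K1 u \<noteq> 0} \<inter> Sigma1 k \<noteq> {}" for k
    using ex_Sigma1_K1_ne_0[of k] by blast
qed auto

end
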